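(* Suppose Assumption 1 (below), Assumption 5 and Assumption 6(i) hold. Then $\widehat x_1^*-x_1^*=o_p(1)$. Assumption 1: for $t\in\{1,2\}$, $Y_t(x)=g_t(U_t(x))$ where for all $(x,v)\in\mathcal X\times[0,1]$ the conditional law of $U_t(x)$ given $V_t=v$ does not depend on $t$. Assumption 5: one observes two independent samples $(Y_{i1},X_{i1})_{i=1}^n$ and $(Y_{i2},X_{i2})_{i=1}^n$, i.i.d. from the distributions of $(Y_1,X_1)$ and $(Y_2,X_2)$. Assumption 6(i): there is a unique $x_1^*$ with $F_{X_1}(x_1^* )=F_{X_2}(x_1^* )\in(0,1)$, and $F_{X_1}(x_1^* )\in(\underline p,\overline p)$.
   Context: Two periods $t\in\{1,2\}$; potential outcomes $Y_t(x)$, $x\in\mathcal X\subset\mathbb R$; observed real treatment $X_t$ and outcome $Y_t=Y_t(X_t)$; $V_t=F_{X_t}(X_t)$. Fixed constants $0<\underline p<\overline p<1$. $\widehat F_{X_t}$ is the empirical cdf of $(X_{it})_{i}$ and $\widehat F^{-1}_{X_t}$ the empirical quantile function; $\Psi_n(x)=\widehat F_{X_2}(x)-\widehat F_{X_1}(x)$; $\widehat x_1^*$ is the smallest $x\in I_n=[\widehat F^{-1}_{X_1}(\underline p),\widehat F^{-1}_{X_1}(\overline p)]$ such that $|\Psi_n(x)|\le|\Psi_n(x')|$ for all $x'\in I_n$. *)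

theory Defs
  imports "HOL-Probability.Probability"
begin

definition ecdf :: "(nat \<Rightarrow> real) \<Rightarrow> nat \<Rightarrow> real \<Rightarrow> real" where
  "ecdf xs n x = real (card {i. i < n \<and> xs i \<le> x}) / real n"

definition quantile :: "(real \<Rightarrow> real) \<Rightarrow> real \<Rightarrow> real" where
  "quantile F p = Inf {x. p \<le> F x}"

definition xhat :: "(nat \<Rightarrow> real) \<Rightarrow> (nat \<Rightarrow> real) \<Rightarrow> nat \<Rightarrow> real \<Rightarrow> real \<Rightarrow> real" where
  "xhat xs1 xs2 n pl ph =
     (let Psi = (\<lambda>x. ecdf xs2 n x - ecdf xs1 n x);
          I = {quantile (ecdf xs1 n) pl .. quantile (ecdf xs1 n) ph}
      in (LEAST x. x \<in> I \<and> (\<forall>x'\<in>I. \<bar>Psi x\<bar> \<le> \<bar>Psi x'\<bar>)))"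

end

theory Submission
  imports Defs
begin

(* Once both empirical cdfs are uniformly eta-close to F_X1 and F_X2, the estimator is pinned down
   deterministically. Since xstar lies in I_n, |Psi_n(xhat)| <= |Psi_n(xstar)| <= 2 eta, hence
   |F_X2 - F_X1| <= 4 eta at xhat, while F_X1(xhat) stays within eta of [pl, ph]. Away from xstar,
   |F_X2 - F_X1| is bounded below on that window (compactness and uniqueness of the crossing), so
   xhat is eps-close to xstar once eta is small.
   Uniform closeness holds outside an exponentially unlikely event: closeness of a monotone
   function to a continuous cdf on a fine finite grid propagates to the whole line, and Hoeffding's
   inequality at each grid point with a union bound controls the grid; no independence between the
   two samples is used. The minimiser in the definition of xhat exists because empirical cdfs are
   right-continuous step functions. *)

lemma (in prob_space) indep_sets_reindex:
  assumes "inj_on f J" and "indep_sets F (f ` J)"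
  shows "indep_sets (F \<circ> f) J"
  unfolding indep_sets_def
proof (intro conjI ballI allI impI)
  show "(F \<circ> f) j \<subseteq> events" if "j \<in> J" for j
    using assms(2) that by (auto simp: indep_sets_def)
  fix K A assume K: "K \<subseteq> J" "K \<noteq> {}" "finite K" and A: "A \<in> Pi K (F \<circ> f)"
  have inj: "inj_on f K" using assms(1) K(1) by (rule inj_on_subset)
  define B where "B i = A (the_inv_into K f i)" for i
  have B: "B (f j) = A j" if "j \<in> K" for j
    unfolding B_def using the_inv_into_f_f[OF inj that] by simp
  have "B \<in> Pi (f ` K) F" using A B by auto
  moreover have "f ` K \<subseteq> f ` J" "f ` K \<noteq> {}" "finite (f ` K)" using K by auto
  ultimately have "prob (\<Inter>i\<in>f ` K. B i) = (\<Prod>i\<in>f ` K. prob (B i))"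
    using assms(2) unfolding indep_sets_def by blast
  then show "prob (\<Inter>j\<in>K. A j) = (\<Prod>j\<in>K. prob (A j))"
    using B by (simp add: prod.reindex[OF inj] cong: INF_cong prod.cong)
qed

lemma (in prob_space) indep_vars_reindex:
  assumes "inj_on f J" and "indep_vars M' X (f ` J)"
  shows "indep_vars (M' \<circ> f) (\<lambda>j. X (f j)) J"
  using assms indep_sets_reindex[OF assms(1), of "\<lambda>i. sigma_sets (space M) {X i -` A \<inter> space M | A. A \<in> sets (M' i)}"]
  unfolding indep_vars_def by (auto simp: comp_def)

lemma (in prob_space) indep_vars_pair_snd_row:
  fixes Y :: "'i \<Rightarrow> nat \<Rightarrow> 'a \<Rightarrow> 'y::topological_space" and X :: "'i \<Rightarrow> nat \<Rightarrow> 'a \<Rightarrow> 'x::topological_space"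
  assumes indep: "indep_vars (\<lambda>_. borel \<Otimes>\<^sub>M borel) (\<lambda>(t, i) \<omega>. (Y t i \<omega>, X t i \<omega>)) (T \<times> UNIV)"
    and t: "t \<in> T"
  shows "indep_vars (\<lambda>_. borel) (X t) UNIV"
proof -
  have "indep_vars (\<lambda>_. borel) (\<lambda>k \<omega>. snd ((\<lambda>(t, i) \<omega>. (Y t i \<omega>, X t i \<omega>)) k \<omega>)) (Pair t ` UNIV)"
    by (rule indep_vars_subset[OF indep_vars_compose2[OF indep]]) (use t in auto)
  from indep_vars_reindex[OF _ this] show ?thesis by (simp add: comp_def inj_on_def)
qed

lemma distr_snd_eq_if_distr_pair_eq:
  assumes eq: "distr M (N1 \<Otimes>\<^sub>M N2) (\<lambda>\<omega>. (f \<omega>, g \<omega>)) = distr M' (N1 \<Otimes>\<^sub>M N2) (\<lambda>\<omega>. (f' \<omega>, g' \<omega>))"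
    and meas: "(\<lambda>\<omega>. (f \<omega>, g \<omega>)) \<in> measurable M (N1 \<Otimes>\<^sub>M N2)"
      "(\<lambda>\<omega>. (f' \<omega>, g' \<omega>)) \<in> measurable M' (N1 \<Otimes>\<^sub>M N2)"
  shows "distr M N2 g = distr M' N2 g'"
proof -
  have "distr M N2 g = distr (distr M (N1 \<Otimes>\<^sub>M N2) (\<lambda>\<omega>. (f \<omega>, g \<omega>))) N2 snd"
    using meas(1) by (subst distr_distr) (auto simp: comp_def)
  also have "\<dots> = distr M' N2 g'"
    unfolding eq using meas(2) by (subst distr_distr) (auto simp: comp_def)
  finally show ?thesis .
qed

lemma cInf_eventually_const_at_right:
  fixes S :: "real set"
  assumes "S \<noteq> {}" "bdd_below S" and const: "\<forall>\<^sub>F y in at_right (Inf S). f y = f (Inf S)"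
  obtains x where "x \<in> S" "f x = f (Inf S)"
proof -
  obtain b where b: "b > Inf S" "\<And>y. Inf S < y \<Longrightarrow> y < b \<Longrightarrow> f y = f (Inf S)"
    using const unfolding eventually_at_right_field by blast
  obtain x where x: "x \<in> S" "x < b"
    using cInf_less_iff[OF assms(1,2)] b(1) by blast
  have "Inf S \<le> x" using x(1) assms(2) by (rule cInf_lower)
  then have "f x = f (Inf S)" using b(2) x(2) by (cases "x = Inf S") auto
  with x(1) show thesis by (rule that)
qed

lemma Least_minimiser_Icc:
  fixes f :: "real \<Rightarrow> real"
  assumes "a \<le> b" "finite (f ` {a..b})"
    and const: "\<And>x. \<forall>\<^sub>F y in at_right x. f y = f x"
  defines "s \<equiv> LEAST x. x \<in> {a..b} \<and> (\<forall>x'\<in>{a..b}. f x \<le> f x')"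
  shows "s \<in> {a..b}" "\<And>x'. x' \<in> {a..b} \<Longrightarrow> f s \<le> f x'"
proof -
  define m where "m = Min (f ` {a..b})"
  have m: "m \<in> f ` {a..b}" "\<And>x. x \<in> {a..b} \<Longrightarrow> m \<le> f x"
    unfolding m_def using assms(1,2) by auto
  define S where "S = {x\<in>{a..b}. f x = m}"
  have S: "S \<noteq> {}" "bdd_below S" using m(1) unfolding S_def by (auto intro: bdd_belowI[of _ a])
  obtain x where x: "x \<in> S" "f x = f (Inf S)"
    using cInf_eventually_const_at_right[OF S const] .
  have "Inf S \<in> {a..b}"
    using cInf_greatest[OF S(1), of a] cInf_lower[OF x(1) S(2)] x(1) by (auto simp: S_def)
  then have "Inf S \<in> S" using x unfolding S_def by simp
  moreover have "Inf S \<le> y" if "y \<in> {a..b}" "\<forall>x'\<in>{a..b}. f y \<le> f x'" for y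
    using that m S(2) by (intro cInf_lower) (auto simp: S_def intro: order.antisym)
  ultimately have "s = Inf S"
    unfolding s_def using m(2) by (intro Least_equality) (auto simp: S_def)
  with \<open>Inf S \<in> S\<close> m(2) show "s \<in> {a..b}" "\<And>x'. x' \<in> {a..b} \<Longrightarrow> f s \<le> f x'"
    by (auto simp: S_def)
qed

lemma grid_bracket:
  fixes a h x :: real
  assumes h: "h > 0" and x: "a \<le> x" "x < a + real N * h"
  obtains k where "k < N" "a + real k * h \<le> x" "x \<le> a + real (Suc k) * h"
proof -
  define k where "k = nat \<lfloor>(x - a) / h\<rfloor>"
  have k: "real k \<le> (x - a) / h" "(x - a) / h < real k + 1"
    unfolding k_def using x h by auto
  have "(x - a) / h < real N" using x h by (simp add: field_simps)
  then have "k < N" using k(1) by linarith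
  moreover have "a + real k * h \<le> x" "x \<le> a + real (Suc k) * h"
    using k h by (simp_all add: field_simps)
  ultimately show thesis by (rule that)
qed

lemma uniform_grid_Icc:
  fixes F :: "real \<Rightarrow> real"
  assumes ab: "a \<le> b" and cont: "continuous_on {a..b} F" and \<eta>: "\<eta> > 0"
  obtains P where "finite P" "a \<in> P" "b \<in> P"
    "\<And>x. x \<in> {a..b} \<Longrightarrow> \<exists>p\<in>P. \<exists>q\<in>P. p \<le> x \<and> x \<le> q \<and> \<bar>F q - F p\<bar> < \<eta>"
proof -
  obtain d where d: "d > 0" and dd: "\<And>x y. x \<in> {a..b} \<Longrightarrow> y \<in> {a..b} \<Longrightarrow> \<bar>y - x\<bar> < d \<Longrightarrow> \<bar>F y - F x\<bar> < \<eta>"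
    using compact_uniformly_continuous[OF cont compact_Icc] \<eta>
    unfolding uniformly_continuous_on_def dist_real_def by metis
  obtain N :: nat where N: "(b - a) / d < real N" using reals_Archimedean2 by blast
  have "0 \<le> (b - a) / d" using ab d by simp
  with N have N0: "N > 0" by simp
  define h where "h = (b - a) / real N"
  have hd: "h < d" using N N0 d unfolding h_def by (simp add: field_simps)
  have bN: "a + real N * h = b" using N0 unfolding h_def by simp
  define P where "P = (\<lambda>k. a + real k * h) ` {..N}"
  have grid: "a + real k * h \<in> P" if "k \<le> N" for k unfolding P_def using that by blast
  show thesis
  proof (rule that)
    show "finite P" "a \<in> P" "b \<in> P" using grid[of 0] grid[of N] bN unfolding P_def by auto
    fix x assume x: "x \<in> {a..b}"
    show "\<exists>p\<in>P. \<exists>q\<in>P. p \<le> x \<and> x \<le> q \<and> \<bar>F q - F p\<bar> < \<eta>"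
    proof (cases "x = b")
      case True
      then show ?thesis using \<open>b \<in> P\<close> \<eta> by force
    next
      case False
      then have h0: "h > 0" using x N0 unfolding h_def by simp
      have xN: "x < a + real N * h" using x False bN by simp
      obtain k where k: "k < N" "a + real k * h \<le> x" "x \<le> a + real (Suc k) * h"
        by (rule grid_bracket[OF h0 _ xN]) (use x in simp_all)
      have "real (Suc k) * h \<le> real N * h" using k(1) h0 by (intro mult_right_mono) auto
      then have "a + real (Suc k) * h \<le> b" using bN by linarith
      then have "\<bar>F (a + real (Suc k) * h) - F (a + real k * h)\<bar> < \<eta>"
        using k(2,3) x hd h0 by (intro dd) (auto simp: algebra_simps)
      then show ?thesis using grid[of k] grid[of "Suc k"] k by fastforce
    qed
  qed
qed

lemma ecdf_eq_sum_indicator: "ecdf xs n x = (\<Sum>i<n. indicator {..x} (xs i)) / real n"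
proof -
  have "(\<Sum>i<n. indicator {..x} (xs i) :: real) = real (card ({..<n} \<inter> {i. xs i \<le> x}))"
    by (simp add: indicator_def sum.If_cases)
  also have "{..<n} \<inter> {i. xs i \<le> x} = {i. i < n \<and> xs i \<le> x}" by auto
  finally show ?thesis unfolding ecdf_def by simp
qed

lemma ecdf_mono: "mono (ecdf xs n)"
  unfolding mono_def ecdf_def by (auto intro!: divide_right_mono card_mono)

lemma ecdf_in_range: "ecdf xs n x \<in> (\<lambda>k. real k / real n) ` {..n}"
proof -
  have "card {i. i < n \<and> xs i \<le> x} \<le> card {..<n}" by (rule card_mono) auto
  then show ?thesis unfolding ecdf_def by auto
qed

lemma ecdf_bounds: "ecdf xs n x \<in> {0..1}"
proof -
  have "card {i. i < n \<and> xs i \<le> x} \<le> card {..<n}" by (rule card_mono) auto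
  then show ?thesis unfolding ecdf_def by (cases "n = 0") (auto simp: field_simps)
qed

lemma ecdf_eventually_const_at_right: "\<forall>\<^sub>F y in at_right x. ecdf xs n y = ecdf xs n x"
proof -
  have "\<forall>\<^sub>F y in at_right x. y < xs i" if "x < xs i" for i
    using eventually_at_right_real[OF that] by eventually_elim simp
  then have "\<forall>\<^sub>F y in at_right x. \<forall>i\<in>{i. i < n \<and> x < xs i}. y < xs i"
    by (intro eventually_ball_finite) auto
  with eventually_at_right_less[of x] show ?thesis
  proof eventually_elim
    case (elim y)
    then have "{i. i < n \<and> xs i \<le> y} = {i. i < n \<and> xs i \<le> x}" by force
    then show ?case unfolding ecdf_def by simp
  qed
qed

lemma ecdf_Max_eq_1: "n > 0 \<Longrightarrow> ecdf xs n (Max (xs ` {..<n})) = 1"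
proof -
  assume "n > 0"
  moreover have "{i. i < n \<and> xs i \<le> Max (xs ` {..<n})} = {..<n}" by auto
  ultimately show ?thesis unfolding ecdf_def by simp
qed

lemma ecdf_pos_imp_Min_le: "0 < ecdf xs n x \<Longrightarrow> Min (xs ` {..<n}) \<le> x"
proof -
  assume "0 < ecdf xs n x"
  then have "{i. i < n \<and> xs i \<le> x} \<noteq> {}" unfolding ecdf_def by (auto simp del: Collect_empty_eq)
  then obtain i where "i < n" "xs i \<le> x" by blast
  then show ?thesis by (meson Min_le finite_imageI finite_lessThan image_eqI lessThan_iff order_trans)
qed

context
  fixes xs :: "nat \<Rightarrow> real" and n :: nat and p :: real
  assumes n: "n > 0" and p: "0 < p" "p \<le> 1"
begin

private lemma quantile_set: "{x. p \<le> ecdf xs n x} \<noteq> {}" "bdd_below {x. p \<le> ecdf xs n x}"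
proof -
  show "{x. p \<le> ecdf xs n x} \<noteq> {}" using ecdf_Max_eq_1[OF n, of xs] p by (metis empty_Collect_eq)
  show "bdd_below {x. p \<le> ecdf xs n x}"
    using ecdf_pos_imp_Min_le[of xs n] p by (auto intro!: bdd_belowI[of _ "Min (xs ` {..<n})"])
qed

lemma quantile_ecdf_le: "p \<le> ecdf xs n x \<Longrightarrow> quantile (ecdf xs n) p \<le> x"
  unfolding quantile_def using quantile_set by (auto intro: cInf_lower)

lemma le_ecdf_quantile: "p \<le> ecdf xs n (quantile (ecdf xs n) p)"
  using cInf_eventually_const_at_right[OF quantile_set ecdf_eventually_const_at_right]
  unfolding quantile_def by (metis mem_Collect_eq)

end

lemma cdf_at_quantile_ecdf:
  fixes F :: "real \<Rightarrow> real"
  assumes n: "n > 0" and p: "0 < p" "p \<le> 1" and cont: "continuous_on UNIV F"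
    and close: "\<And>x. \<bar>ecdf xs n x - F x\<bar> \<le> \<eta>"
  shows "p - \<eta> \<le> F (quantile (ecdf xs n) p)" "F (quantile (ecdf xs n) p) \<le> p + \<eta>"
proof -
  define q where "q = quantile (ecdf xs n) p"
  show "p - \<eta> \<le> F q"
    using le_ecdf_quantile[OF n p, of xs] close[of q] unfolding q_def by linarith
  have "(F \<longlongrightarrow> F q) (at_left q)"
    using cont by (meson UNIV_I continuous_on_def subset_UNIV tendsto_within_subset)
  moreover have "\<forall>\<^sub>F y in at_left q. y \<in> {q - 1<..<q}"
    by (rule eventually_at_left_real) simp
  then have "\<forall>\<^sub>F y in at_left q. F y \<le> p + \<eta>"
  proof eventually_elim
    case (elim y)
    then have "ecdf xs n y < p"
      using quantile_ecdf_le[OF n p, of xs y] unfolding q_def by (metis greaterThanLessThan_iff not_le)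
    then show ?case using close[of y] by linarith
  qed
  ultimately show "F q \<le> p + \<eta>" by (rule tendsto_upperbound) simp
qed

lemma xhat_minimises:
  fixes xs1 xs2 :: "nat \<Rightarrow> real"
  assumes n: "n > 0" and p: "0 < pl" "pl \<le> ph" "ph \<le> 1"
  defines "I \<equiv> {quantile (ecdf xs1 n) pl .. quantile (ecdf xs1 n) ph}"
    and "Psi \<equiv> \<lambda>x. ecdf xs2 n x - ecdf xs1 n x"
  shows "xhat xs1 xs2 n pl ph \<in> I" "\<And>x. x \<in> I \<Longrightarrow> \<bar>Psi (xhat xs1 xs2 n pl ph)\<bar> \<le> \<bar>Psi x\<bar>"
proof -
  have xhat: "xhat xs1 xs2 n pl ph = (LEAST x. x \<in> I \<and> (\<forall>x'\<in>I. \<bar>Psi x\<bar> \<le> \<bar>Psi x'\<bar>))"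
    unfolding xhat_def I_def Psi_def Let_def ..
  have "quantile (ecdf xs1 n) pl \<le> quantile (ecdf xs1 n) ph"
    using p le_ecdf_quantile[OF n, of ph xs1] by (intro quantile_ecdf_le[OF n]) auto
  moreover have "\<bar>Psi x\<bar> \<in> (\<lambda>(j, k). \<bar>real j / real n - real k / real n\<bar>) ` ({..n} \<times> {..n})" for x
  proof -
    obtain j k where "j \<le> n" "ecdf xs2 n x = real j / real n" "k \<le> n" "ecdf xs1 n x = real k / real n"
      using ecdf_in_range[of xs2 n x] ecdf_in_range[of xs1 n x] by auto
    then show ?thesis unfolding Psi_def by (intro image_eqI[of _ _ "(j, k)"]) auto
  qed
  then have "(\<lambda>x. \<bar>Psi x\<bar>) ` I \<subseteq> (\<lambda>(j, k). \<bar>real j / real n - real k / real n\<bar>) ` ({..n} \<times> {..n})"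
    by blast
  then have "finite ((\<lambda>x. \<bar>Psi x\<bar>) ` I)" by (rule finite_subset) simp
  moreover have "\<forall>\<^sub>F y in at_right x. \<bar>Psi y\<bar> = \<bar>Psi x\<bar>" for x
    using ecdf_eventually_const_at_right[of xs1 n x] ecdf_eventually_const_at_right[of xs2 n x]
    unfolding Psi_def by eventually_elim simp
  ultimately show "xhat xs1 xs2 n pl ph \<in> I" "\<And>x. x \<in> I \<Longrightarrow> \<bar>Psi (xhat xs1 xs2 n pl ph)\<bar> \<le> \<bar>Psi x\<bar>"
    unfolding xhat I_def by (rule Least_minimiser_Icc)+
qed

lemma xhat_near_crossing:
  fixes F1 F2 :: "real \<Rightarrow> real" and xs1 xs2 :: "nat \<Rightarrow> real"
  assumes n: "n > 0" and p: "0 < pl" "pl \<le> ph" "ph \<le> 1"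
    and cont1: "continuous_on UNIV F1" and mono1: "mono F1"
    and close1: "\<And>x. \<bar>ecdf xs1 n x - F1 x\<bar> \<le> \<eta>"
    and close2: "\<And>x. \<bar>ecdf xs2 n x - F2 x\<bar> \<le> \<eta>"
    and z: "pl + \<eta> < F1 z" "F1 z < ph - \<eta>" "F1 z = F2 z"
  defines "s \<equiv> xhat xs1 xs2 n pl ph"
  shows "pl - \<eta> \<le> F1 s" "F1 s \<le> ph + \<eta>" "\<bar>F2 s - F1 s\<bar> \<le> 4 * \<eta>"
proof -
  define q1 where "q1 = quantile (ecdf xs1 n) pl"
  define q2 where "q2 = quantile (ecdf xs1 n) ph"
  have q1: "pl - \<eta> \<le> F1 q1" and q2: "F1 q2 \<le> ph + \<eta>" "ph - \<eta> \<le> F1 q2"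
    unfolding q1_def q2_def using cdf_at_quantile_ecdf[OF n _ _ cont1 close1] p by auto
  have "q1 \<le> z"
    unfolding q1_def using close1[of z] z(1) by (intro quantile_ecdf_le[OF n]) (use p in auto)
  moreover have "z \<le> q2"
    using q2(2) z(2) monoD[OF mono1, of q2 z] by (cases "z \<le> q2") auto
  ultimately have zI: "z \<in> {q1..q2}" by simp
  have sI: "s \<in> {q1..q2}" and smin: "\<bar>ecdf xs2 n s - ecdf xs1 n s\<bar> \<le> \<bar>ecdf xs2 n z - ecdf xs1 n z\<bar>"
    using xhat_minimises[OF n p] zI unfolding s_def q1_def q2_def by auto
  show "pl - \<eta> \<le> F1 s" using q1 monoD[OF mono1, of q1 s] sI by simp
  show "F1 s \<le> ph + \<eta>" using q2(1) monoD[OF mono1, of s q2] sI by simp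
  show "\<bar>F2 s - F1 s\<bar> \<le> 4 * \<eta>"
    using close1[of s] close2[of s] close1[of z] close2[of z] smin z(3) unfolding abs_le_iff by linarith
qed

lemma crossing_separation:
  assumes D1: "real_distribution D1" and cont1: "continuous_on UNIV (cdf D1)"
    and cont2: "continuous_on UNIV F2"
    and lo: "0 < lo" and hi: "hi < 1" and \<epsilon>: "\<epsilon> > 0"
    and uniq: "\<And>x. cdf D1 x = F2 x \<Longrightarrow> cdf D1 x \<in> {0<..<1} \<Longrightarrow> x = z"
  obtains m where "m > 0"
    "\<And>x. lo \<le> cdf D1 x \<Longrightarrow> cdf D1 x \<le> hi \<Longrightarrow> \<epsilon> \<le> \<bar>x - z\<bar> \<Longrightarrow> m \<le> \<bar>F2 x - cdf D1 x\<bar>"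
proof -
  interpret real_distribution D1 by (rule D1)
  obtain a where a: "\<And>x. x \<le> a \<Longrightarrow> cdf D1 x < lo"
    using order_tendstoD(2)[OF cdf_lim_at_bot lo] unfolding eventually_at_bot_linorder by auto
  obtain b where b: "\<And>x. b \<le> x \<Longrightarrow> hi < cdf D1 x"
    using order_tendstoD(1)[OF cdf_lim_at_top_prob hi] unfolding eventually_at_top_linorder by auto
  define K where "K = {x. lo \<le> cdf D1 x \<and> cdf D1 x \<le> hi \<and> \<epsilon> \<le> \<bar>x - z\<bar>}"
  have "K \<subseteq> {a..b}"
  proof
    fix x assume "x \<in> K"
    then have "\<not> x \<le> a" "\<not> b \<le> x" using a[of x] b[of x] unfolding K_def by auto
    then show "x \<in> {a..b}" by simp
  qed
  moreover have "closed K" unfolding K_def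
    by (intro closed_Collect_conj closed_Collect_le cont1 continuous_intros)
  ultimately have "compact K" by (metis compact_Icc compact_Int_closed inf.absorb_iff2)
  have pos: "0 < \<bar>F2 x - cdf D1 x\<bar>" if "x \<in> K" for x
    using that uniq[of x] lo hi \<epsilon> unfolding K_def by force
  show thesis
  proof (cases "K = {}")
    case True
    then show thesis by (intro that[of 1]) (auto simp: K_def)
  next
    case False
    have "continuous_on K (\<lambda>x. \<bar>F2 x - cdf D1 x\<bar>)"
      by (intro continuous_intros continuous_on_subset[OF cont1] continuous_on_subset[OF cont2]) auto
    then obtain k where "k \<in> K" "\<And>x. x \<in> K \<Longrightarrow> \<bar>F2 k - cdf D1 k\<bar> \<le> \<bar>F2 x - cdf D1 x\<bar>"
      using continuous_attains_inf[OF \<open>compact K\<close> False] by blast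
    then show thesis using pos by (intro that[of "\<bar>F2 k - cdf D1 k\<bar>"]) (auto simp: K_def)
  qed
qed

lemma xhat_localised:
  fixes F2 :: "real \<Rightarrow> real"
  assumes p: "0 < pl" "pl < ph" "ph < 1"
    and D1: "real_distribution D1" and cont1: "continuous_on UNIV (cdf D1)"
    and cont2: "continuous_on UNIV F2"
    and cross: "cdf D1 z = F2 z" and z: "cdf D1 z \<in> {pl<..<ph}"
    and uniq: "\<And>x. cdf D1 x = F2 x \<Longrightarrow> cdf D1 x \<in> {0<..<1} \<Longrightarrow> x = z"
    and \<epsilon>: "\<epsilon> > 0"
  obtains \<eta> where "\<eta> > 0"
    "\<And>n xs1 xs2. n > 0 \<Longrightarrow> (\<And>x. \<bar>ecdf xs1 n x - cdf D1 x\<bar> \<le> \<eta>) \<Longrightarrow> (\<And>x. \<bar>ecdf xs2 n x - F2 x\<bar> \<le> \<eta>) \<Longrightarrow>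
      \<bar>xhat xs1 xs2 n pl ph - z\<bar> < \<epsilon>"
proof -
  interpret real_distribution D1 by (rule D1)
  \<comment> \<open>The window [pl - \<eta>0, ph + \<eta>0] stays inside (0, 1), where the crossing is unique.\<close>
  define \<eta>0 where "\<eta>0 = min pl (1 - ph) / 2"
  have \<eta>0: "0 < pl - \<eta>0" "ph + \<eta>0 < 1" "0 < \<eta>0"
    using p unfolding \<eta>0_def by (auto simp: min_def field_simps)
  obtain m where "m > 0" and sep:
    "\<And>x. pl - \<eta>0 \<le> cdf D1 x \<Longrightarrow> cdf D1 x \<le> ph + \<eta>0 \<Longrightarrow> \<epsilon> \<le> \<bar>x - z\<bar> \<Longrightarrow> m \<le> \<bar>F2 x - cdf D1 x\<bar>"
    using crossing_separation[OF D1 cont1 cont2 \<eta>0(1,2) \<epsilon> uniq] by blast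
  define \<eta> where "\<eta> = min (min \<eta>0 (m / 5)) (min ((cdf D1 z - pl) / 2) ((ph - cdf D1 z) / 2))"
  have \<eta>_le: "\<eta> \<le> \<eta>0" "\<eta> \<le> m / 5" "\<eta> \<le> (cdf D1 z - pl) / 2" "\<eta> \<le> (ph - cdf D1 z) / 2"
    unfolding \<eta>_def by (meson min.cobounded1 min.cobounded2 order_trans)+
  have "\<eta> > 0" using \<eta>0 z \<open>m > 0\<close> unfolding \<eta>_def by auto
  with \<eta>_le z have \<eta>: "\<eta> > 0" "\<eta> \<le> \<eta>0" "4 * \<eta> < m" "pl + \<eta> < cdf D1 z" "cdf D1 z < ph - \<eta>"
    by auto
  show thesis
  proof (rule that[OF \<eta>(1)])
    fix n xs1 xs2
    assume n: "n > 0" and close1: "\<And>x. \<bar>ecdf xs1 n x - cdf D1 x\<bar> \<le> \<eta>"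
      and close2: "\<And>x. \<bar>ecdf xs2 n x - F2 x\<bar> \<le> \<eta>"
    define s where "s = xhat xs1 xs2 n pl ph"
    note near = xhat_near_crossing[OF n p(1) less_imp_le[OF p(2)] less_imp_le[OF p(3)] cont1
        mono_onI[OF cdf_nondecreasing] close1 close2 \<eta>(4,5) cross, folded s_def]
    have "pl - \<eta>0 \<le> cdf D1 s" "cdf D1 s \<le> ph + \<eta>0" "\<bar>F2 s - cdf D1 s\<bar> < m"
      using near \<eta>(2,3) by linarith+
    then show "\<bar>xhat xs1 xs2 n pl ph - z\<bar> < \<epsilon>"
      using sep[of s] unfolding s_def by fastforce
  qed
qed

lemma cdf_uniform_grid:
  assumes D: "real_distribution D" and cont: "continuous_on UNIV (cdf D)" and \<eta>: "\<eta> > 0"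
  obtains P where "finite P"
    "\<And>G x. mono G \<Longrightarrow> (\<And>y. G y \<in> {0..1}) \<Longrightarrow> (\<And>p. p \<in> P \<Longrightarrow> \<bar>G p - cdf D p\<bar> \<le> \<eta>) \<Longrightarrow>
      \<bar>G x - cdf D x\<bar> \<le> 2 * \<eta>"
proof -
  interpret real_distribution D by (rule D)
  obtain a where a: "cdf D a < \<eta>"
    using order_tendstoD(2)[OF cdf_lim_at_bot \<eta>] unfolding eventually_at_bot_linorder by auto
  have "\<forall>\<^sub>F x in at_top. 1 - \<eta> < cdf D x" using order_tendstoD(1)[OF cdf_lim_at_top_prob] \<eta> by simp
  then obtain b where b: "1 - \<eta> < cdf D b" "a \<le> b"
    unfolding eventually_at_top_linorder by (meson max.cobounded1 max.cobounded2)
  obtain P where P: "finite P" "a \<in> P" "b \<in> P"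
    "\<And>x. x \<in> {a..b} \<Longrightarrow> \<exists>p\<in>P. \<exists>q\<in>P. p \<le> x \<and> x \<le> q \<and> \<bar>cdf D q - cdf D p\<bar> < \<eta>"
    using uniform_grid_Icc[OF b(2) continuous_on_subset[OF cont] \<eta>] by blast
  show thesis
  proof (rule that[OF P(1)])
    fix G :: "real \<Rightarrow> real" and x
    assume G: "mono G" "\<And>y. G y \<in> {0..1}" and close: "\<And>p. p \<in> P \<Longrightarrow> \<bar>G p - cdf D p\<bar> \<le> \<eta>"
    note F = cdf_nonneg cdf_bounded_prob
    have mono: "G y \<le> G y'" "cdf D y \<le> cdf D y'" if "y \<le> y'" for y y'
      using that G(1) by (auto intro: cdf_nondecreasing monoD)
    consider "x < a" | "b < x" | "x \<in> {a..b}" by force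
    then show "\<bar>G x - cdf D x\<bar> \<le> 2 * \<eta>"
    proof cases
      case 1
      then show ?thesis using mono[of x a] close[OF P(2)] a F[of x] G(2)[of x] by (auto simp: abs_le_iff)
    next
      case 2
      then show ?thesis using mono[of b x] close[OF P(3)] b F[of x] G(2)[of x] by (auto simp: abs_le_iff)
    next
      case 3
      then obtain p q where "p \<in> P" "q \<in> P" "p \<le> x" "x \<le> q" "\<bar>cdf D q - cdf D p\<bar> < \<eta>"
        using P(4) by blast
      then show ?thesis using mono[of p x] mono[of x q] close[of p] close[of q] by (auto simp: abs_le_iff)
    qed
  qed
qed

lemma (in prob_space) ecdf_deviation_Hoeffding:
  assumes indep: "indep_vars (\<lambda>_. borel) xs {..<n}" and law: "\<And>i. i < n \<Longrightarrow> distr M borel (xs i) = D"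
    and n: "n > 0" and \<eta>: "\<eta> \<ge> 0"
  shows "prob {\<omega>\<in>space M. \<eta> \<le> \<bar>ecdf (\<lambda>i. xs i \<omega>) n x - cdf D x\<bar>} \<le> 2 * exp (-2 * real n * \<eta>\<^sup>2)"
proof -
  define Z :: "nat \<Rightarrow> 'a \<Rightarrow> real" where "Z i \<omega> = indicator {..x} (xs i \<omega>)" for i \<omega>
  have rv: "random_variable borel (xs i)" if "i < n" for i
    using indep that unfolding indep_vars_def by simp
  have law_Z: "distr M borel (Z i) = distr D borel (indicator {..x})" if "i < n" for i
    unfolding Z_def law[OF that, symmetric] using rv[OF that] by (subst distr_distr) (auto simp: comp_def)
  interpret H: Hoeffding_ineq_iid M "{..<n}" Z "Z 0" 0 1 "expectation (Z 0)"
  proof unfold_locales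
    show "indep_vars (\<lambda>_. borel) Z {..<n}"
      unfolding Z_def by (rule indep_vars_compose2[OF indep]) simp
    show "distr M borel (Z i) = distr M borel (Z 0)" if "i \<in> {..<n}" for i
      using law_Z that n by simp
    show "random_variable borel (Z 0)" using rv[OF n] unfolding Z_def by simp
  qed (auto simp: Z_def)
  have "expectation (Z 0) = prob (xs 0 -` {..x} \<inter> space M)"
    unfolding Z_def using rv[OF n] by (simp add: indicator_vimage[symmetric] del: indicator_vimage)
  also have "\<dots> = cdf D x"
    unfolding cdf_def law[OF n, symmetric] using rv[OF n] by (simp add: measure_distr)
  finally have mean: "expectation (Z 0) = cdf D x" .
  have average: "(\<Sum>i<n. Z i \<omega>) / real n = ecdf (\<lambda>i. xs i \<omega>) n x" for \<omega>
    unfolding Z_def ecdf_eq_sum_indicator ..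
  have "prob {\<omega>\<in>space M. \<bar>(\<Sum>i\<in>{..<n}. Z i \<omega>) / real (card {..<n}) - expectation (Z 0)\<bar> \<ge> \<eta>}
      \<le> 2 * exp (-2 * real (card {..<n}) * \<eta>\<^sup>2 / (1 - 0)\<^sup>2)"
    by (rule H.Hoeffding_ineq_abs_ge') (use \<eta> n in auto)
  then show ?thesis by (simp add: average mean)
qed

lemma tendsto_mult_exp_neg_linear:
  fixes C c :: real
  assumes "c > 0"
  shows "(\<lambda>n. C * exp (- (c * real n))) \<longlonglongrightarrow> 0"
proof -
  have "filterlim (\<lambda>n. c * real n) at_top sequentially"
    by (rule filterlim_tendsto_pos_mult_at_top[OF tendsto_const assms filterlim_real_sequentially])
  then have "filterlim (\<lambda>n. - (c * real n)) at_bot sequentially"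
    by (simp add: filterlim_uminus_at_bot)
  then show ?thesis by (intro tendsto_mult_right_zero filterlim_compose[OF exp_at_bot])
qed

lemma (in prob_space) ecdf_deviation_in_events:
  assumes "\<And>i. random_variable borel (xs i)"
  shows "{\<omega>\<in>space M. \<eta> \<le> \<bar>ecdf (\<lambda>i. xs i \<omega>) n x - c\<bar>} \<in> events"
  using assms unfolding ecdf_eq_sum_indicator by measurable

lemma (in prob_space) ecdf_grid_deviation_prob:
  assumes indep: "indep_vars (\<lambda>_. borel) xs UNIV" and law: "\<And>i. distr M borel (xs i) = D"
    and P: "finite P" and n: "n > 0" and \<eta>: "\<eta> \<ge> 0"
  shows "prob (\<Union>p\<in>P. {\<omega>\<in>space M. \<eta> \<le> \<bar>ecdf (\<lambda>i. xs i \<omega>) n p - cdf D p\<bar>})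
    \<le> real (card P) * (2 * exp (-2 * real n * \<eta>\<^sup>2))"
proof -
  have "random_variable borel (xs i)" for i using indep unfolding indep_vars_def by simp
  then have "prob (\<Union>p\<in>P. {\<omega>\<in>space M. \<eta> \<le> \<bar>ecdf (\<lambda>i. xs i \<omega>) n p - cdf D p\<bar>})
      \<le> (\<Sum>p\<in>P. prob {\<omega>\<in>space M. \<eta> \<le> \<bar>ecdf (\<lambda>i. xs i \<omega>) n p - cdf D p\<bar>})"
    using P by (intro finite_measure_subadditive_finite) (auto intro: ecdf_deviation_in_events)
  also have "\<dots> \<le> (\<Sum>p\<in>P. 2 * exp (-2 * real n * \<eta>\<^sup>2))"
    using n \<eta> by (intro sum_mono ecdf_deviation_Hoeffding indep_vars_subset[OF indep]) (auto simp: law)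
  finally show ?thesis by simp
qed

lemma (in prob_space) ecdf_uniform_consistency:
  assumes indep: "indep_vars (\<lambda>_. borel) xs UNIV" and law: "\<And>i. distr M borel (xs i) = D"
    and D: "real_distribution D" and cont: "continuous_on UNIV (cdf D)"
    and \<eta>: "\<eta> > 0" and \<delta>: "\<delta> > 0"
  shows "\<forall>\<^sub>F n in sequentially. \<exists>A\<in>events.
           {\<omega>\<in>space M. \<exists>x. \<eta> < \<bar>ecdf (\<lambda>i. xs i \<omega>) n x - cdf D x\<bar>} \<subseteq> A \<and> prob A < \<delta>"
proof -
  obtain P where P: "finite P"
    "\<And>G x. mono G \<Longrightarrow> (\<And>y. G y \<in> {0..1}) \<Longrightarrow> (\<And>p. p \<in> P \<Longrightarrow> \<bar>G p - cdf D p\<bar> \<le> \<eta> / 2) \<Longrightarrow>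
      \<bar>G x - cdf D x\<bar> \<le> 2 * (\<eta> / 2)"
    using cdf_uniform_grid[OF D cont, of "\<eta> / 2"] \<eta> by auto
  define A where "A n = (\<Union>p\<in>P. {\<omega>\<in>space M. \<eta> / 2 \<le> \<bar>ecdf (\<lambda>i. xs i \<omega>) n p - cdf D p\<bar>})" for n
  have rv: "random_variable borel (xs i)" for i using indep unfolding indep_vars_def by simp
  have A_events: "A n \<in> events" for n
    unfolding A_def using P(1) by (intro sets.finite_UN ecdf_deviation_in_events[OF rv])
  have "(\<lambda>n. real (card P) * 2 * exp (- (\<eta>\<^sup>2 / 2 * real n))) \<longlonglongrightarrow> 0"
    using \<eta> by (intro tendsto_mult_exp_neg_linear) simp
  then have "\<forall>\<^sub>F n in sequentially. real (card P) * 2 * exp (- (\<eta>\<^sup>2 / 2 * real n)) < \<delta>"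
    using \<delta> by (rule order_tendstoD)
  with eventually_gt_at_top[of 0] show ?thesis
  proof eventually_elim
    case (elim n)
    have "prob (A n) < \<delta>"
      using ecdf_grid_deviation_prob[OF indep law P(1) \<open>n > 0\<close>, of "\<eta> / 2"] \<eta> elim(2)
      unfolding A_def by (simp add: power_divide mult.commute)
    moreover have "\<omega> \<in> A n" if "\<omega> \<in> space M" "\<eta> < \<bar>ecdf (\<lambda>i. xs i \<omega>) n x - cdf D x\<bar>" for \<omega> x
    proof (rule ccontr)
      assume "\<omega> \<notin> A n"
      then have "\<bar>ecdf (\<lambda>i. xs i \<omega>) n p - cdf D p\<bar> \<le> \<eta> / 2" if "p \<in> P" for p
        using that \<open>\<omega> \<in> space M\<close> unfolding A_def by force
      then have "\<bar>ecdf (\<lambda>i. xs i \<omega>) n x - cdf D x\<bar> \<le> \<eta>"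
        using P(2)[OF ecdf_mono ecdf_bounds] by simp
      with that(2) show False by simp
    qed
    ultimately show ?case using A_events by blast
  qed
qed

lemma (in prob_space) xhat_consistent:
  assumes p: "0 < pl" "pl < ph" "ph < 1"
    and indep1: "indep_vars (\<lambda>_. borel) xs1 UNIV" and law1: "\<And>i. distr M borel (xs1 i) = D1"
    and indep2: "indep_vars (\<lambda>_. borel) xs2 UNIV" and law2: "\<And>i. distr M borel (xs2 i) = D2"
    and D1: "real_distribution D1" and cont1: "continuous_on UNIV (cdf D1)"
    and D2: "real_distribution D2" and cont2: "continuous_on UNIV (cdf D2)"
    and cross: "cdf D1 z = cdf D2 z" and z: "cdf D1 z \<in> {pl<..<ph}"
    and uniq: "\<And>x. cdf D1 x = cdf D2 x \<Longrightarrow> cdf D1 x \<in> {0<..<1} \<Longrightarrow> x = z"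
    and \<epsilon>: "\<epsilon> > 0" and \<delta>: "\<delta> > 0"
  shows "\<forall>\<^sub>F n in sequentially. \<exists>A\<in>events.
           {\<omega>\<in>space M. \<epsilon> < \<bar>xhat (\<lambda>i. xs1 i \<omega>) (\<lambda>i. xs2 i \<omega>) n pl ph - z\<bar>} \<subseteq> A \<and> prob A < \<delta>"
proof -
  obtain \<eta> where \<eta>: "\<eta> > 0" and localised:
    "\<And>n xs1 xs2. n > 0 \<Longrightarrow> (\<And>x. \<bar>ecdf xs1 n x - cdf D1 x\<bar> \<le> \<eta>) \<Longrightarrow> (\<And>x. \<bar>ecdf xs2 n x - cdf D2 x\<bar> \<le> \<eta>) \<Longrightarrow>
      \<bar>xhat xs1 xs2 n pl ph - z\<bar> < \<epsilon>"
    using xhat_localised[OF p D1 cont1 cont2 cross z uniq \<epsilon>] by blast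
  have "\<delta> / 2 > 0" using \<delta> by simp
  note consistent = ecdf_uniform_consistency[OF _ _ _ _ \<eta> this]
  from eventually_gt_at_top[of 0] consistent[OF indep1 law1 D1 cont1] consistent[OF indep2 law2 D2 cont2]
  show ?thesis
  proof eventually_elim
    case (elim n)
    then obtain A1 A2 where A: "A1 \<in> events" "A2 \<in> events" "prob A1 < \<delta> / 2" "prob A2 < \<delta> / 2"
      and A1: "{\<omega>\<in>space M. \<exists>x. \<eta> < \<bar>ecdf (\<lambda>i. xs1 i \<omega>) n x - cdf D1 x\<bar>} \<subseteq> A1"
      and A2: "{\<omega>\<in>space M. \<exists>x. \<eta> < \<bar>ecdf (\<lambda>i. xs2 i \<omega>) n x - cdf D2 x\<bar>} \<subseteq> A2"
      by blast
    have "prob (A1 \<union> A2) < \<delta>" using measure_Un_le[OF A(1,2)] A(3,4) by simp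
    moreover have "{\<omega>\<in>space M. \<epsilon> < \<bar>xhat (\<lambda>i. xs1 i \<omega>) (\<lambda>i. xs2 i \<omega>) n pl ph - z\<bar>} \<subseteq> A1 \<union> A2"
      using localised[OF \<open>n > 0\<close>] A1 A2 by (force simp: not_less)
    ultimately show ?case using A(1,2) by blast
  qed
qed

theorem lemma1:
  fixes M0 :: "'w measure" and M :: "'o measure" and SU :: "'u measure"
    and XX :: "real set"
    and X :: "nat \<Rightarrow> 'w \<Rightarrow> real" and U :: "nat \<Rightarrow> real \<Rightarrow> 'w \<Rightarrow> 'u"
    and g :: "nat \<Rightarrow> 'u \<Rightarrow> real" and Y :: "nat \<Rightarrow> 'w \<Rightarrow> real"
    and XS :: "nat \<Rightarrow> nat \<Rightarrow> 'o \<Rightarrow> real" and YS :: "nat \<Rightarrow> nat \<Rightarrow> 'o \<Rightarrow> real"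
    and pl ph xstar :: real
  assumes p_bounds: "0 < pl" "pl < ph" "ph < 1"
    \<comment> \<open>population model\<close>
    and M0: "prob_space M0"
    and X_meas: "\<And>t. t \<in> {1,2} \<Longrightarrow> X t \<in> borel_measurable M0"
    and X_in: "\<And>t \<omega>. t \<in> {1,2} \<Longrightarrow> \<omega> \<in> space M0 \<Longrightarrow> X t \<omega> \<in> XX"
    and X_cont: "\<And>t. t \<in> {1,2} \<Longrightarrow> continuous_on UNIV (cdf (distr M0 borel (X t)))"
    and U_meas: "\<And>t x. t \<in> {1,2} \<Longrightarrow> x \<in> XX \<Longrightarrow> U t x \<in> measurable M0 SU"
    and g_meas: "\<And>t. t \<in> {1,2} \<Longrightarrow> g t \<in> measurable SU borel"
    and Y_def: "\<And>t \<omega>. t \<in> {1,2} \<Longrightarrow> \<omega> \<in> space M0 \<Longrightarrow> Y t \<omega> = g t (U t (X t \<omega>) \<omega>)"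
    and Y_meas: "\<And>t. t \<in> {1,2} \<Longrightarrow> Y t \<in> borel_measurable M0"
    \<comment> \<open>Assumption 1: common (regular) conditional law of U_t(x) given V_t = v\<close>
    and A1: "\<exists>K :: real \<Rightarrow> real \<Rightarrow> 'u measure.
        (\<forall>x\<in>XX. \<forall>v\<in>{0..1}. prob_space (K x v) \<and> sets (K x v) = sets SU) \<and>
        (\<forall>x\<in>XX. \<forall>B\<in>sets SU. (\<lambda>v. measure (K x v) B) \<in> borel_measurable borel) \<and>
        (\<forall>t\<in>{1,2}. \<forall>x\<in>XX. \<forall>A\<in>sets borel. \<forall>B\<in>sets SU.
           measure M0 {\<omega>\<in>space M0. cdf (distr M0 borel (X t)) (X t \<omega>) \<in> A \<and> U t x \<omega> \<in> B}
           = (\<integral>v. indicator A v * measure (K x v) B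
                \<partial>(distr M0 borel (\<lambda>\<omega>. cdf (distr M0 borel (X t)) (X t \<omega>)))))"
    \<comment> \<open>Assumption 5: two independent i.i.d. samples\<close>
    and M: "prob_space M"
    and A5_indep: "prob_space.indep_vars M (\<lambda>_. borel \<Otimes>\<^sub>M borel)
                     (\<lambda>(t,i) \<omega>. (YS t i \<omega>, XS t i \<omega>)) ({1,2} \<times> UNIV)"
    and A5_law: "\<And>t i. t \<in> {1,2} \<Longrightarrow>
        distr M (borel \<Otimes>\<^sub>M borel) (\<lambda>\<omega>. (YS t i \<omega>, XS t i \<omega>))
        = distr M0 (borel \<Otimes>\<^sub>M borel) (\<lambda>\<omega>. (Y t \<omega>, X t \<omega>))"
    \<comment> \<open>Assumption 6(i)\<close>
    and A6_cross: "cdf (distr M0 borel (X 1)) xstar = cdf (distr M0 borel (X 2)) xstar"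
    and A6_in01: "cdf (distr M0 borel (X 1)) xstar \<in> {0<..<1}"
    and A6_unique: "\<And>x. cdf (distr M0 borel (X 1)) x = cdf (distr M0 borel (X 2)) x \<Longrightarrow>
                     cdf (distr M0 borel (X 1)) x \<in> {0<..<1} \<Longrightarrow> x = xstar"
    and A6_p: "cdf (distr M0 borel (X 1)) xstar \<in> {pl<..<ph}"
  shows "\<forall>\<epsilon>>0. \<forall>\<delta>>0. \<exists>N. \<forall>n\<ge>N. \<exists>A\<in>sets M.
           {\<omega>\<in>space M. \<epsilon> < \<bar>xhat (\<lambda>i. XS 1 i \<omega>) (\<lambda>i. XS 2 i \<omega>) n pl ph - xstar\<bar>} \<subseteq> A
           \<and> measure M A < \<delta>"
proof -
  interpret prob_space M by (rule M)
  have sample: "indep_vars (\<lambda>_. borel) (XS t) UNIV" "distr M borel (XS t i) = distr M0 borel (X t)"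
    "real_distribution (distr M0 borel (X t))" if t: "t \<in> {1, 2}" for t i
  proof -
    show "indep_vars (\<lambda>_. borel) (XS t) UNIV" by (rule indep_vars_pair_snd_row[OF A5_indep t])
    have pair: "(\<lambda>\<omega>. (YS t i \<omega>, XS t i \<omega>)) \<in> measurable M (borel \<Otimes>\<^sub>M borel)"
      using A5_indep t unfolding indep_vars_def by auto
    show "distr M borel (XS t i) = distr M0 borel (X t)"
      by (rule distr_snd_eq_if_distr_pair_eq[OF A5_law[OF t] pair measurable_Pair[OF Y_meas[OF t] X_meas[OF t]]])
    show "real_distribution (distr M0 borel (X t))"
      by (rule prob_space.real_distribution_distr[OF M0 X_meas[OF t]])
  qed
  have "\<forall>\<^sub>F n in sequentially. \<exists>A\<in>events.
      {\<omega>\<in>space M. \<epsilon> < \<bar>xhat (\<lambda>i. XS 1 i \<omega>) (\<lambda>i. XS 2 i \<omega>) n pl ph - xstar\<bar>} \<subseteq> A \<and> prob A < \<delta>"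
    if "\<epsilon> > 0" "\<delta> > 0" for \<epsilon> \<delta> :: real
    using xhat_consistent[OF p_bounds sample(1,2)[of 1] sample(1,2)[of 2] sample(3)[of 1] X_cont[of 1]
        sample(3)[of 2] X_cont[of 2] A6_cross A6_p A6_unique that] by simp
  then show ?thesis unfolding eventually_sequentially by blast
qed

end
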